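(* Let $0<\alpha<d$, $1\leq p<d/\alpha$, $f\in L^p(\mathbb{R}^d)$, and let $x\in\mathbb{R}^d$ be a Lebesgue point of $f$. Then $\mathcal{B}^c_\alpha(x)$ and $\mathcal{B}^u_\alpha(x)$ are nonempty; that is, (centered case) there is a largest $r>0$ with $\mathrm{M}^c_\alpha f(x)=r^\alpha f_{B(x,r)}$, and (uncentered case) there is a ball $B$ with $x\in\overline B$ and $r(B)^\alpha f_B=\mathrm{M}^u_\alpha f(x)$ such that $r(A)^\alpha f_A<\mathrm{M}^u_\alpha f(x)$ for all balls $A\supsetneq B$.
   Context: $f_B=\frac1{|B|}\int_B|f|$, $r(B)$ is the radius of the ball $B$, $\overline B$ its closure. $\mathrm{M}^c_\alpha f(x)=\sup_{r>0}r^\alpha f_{B(x,r)}$ and $\mathrm{M}^u_\alpha f(x)=\sup_{B\ni x}r(B)^\alpha f_B$ over balls containing $x$. $\mathcal{B}^c_\alpha(x)=\{B(x,r)\}$ with $r$ the largest radius attaining $\mathrm{M}^c_\alpha f(x)=r^\alpha f_{B(x,r)}$; $\mathcal{B}^u_\alpha(x)$ is the set of balls $B$ with $x\in\overline B$, $r(B)^\alpha f_B=\mathrm{M}^u_\alpha f(x)$ and $r(A)^\alpha f_A<\mathrm{M}^u_\alpha f(x)$ for every ball $A\supsetneq B$. *)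

theory Defs
  imports "HOL-Analysis.Analysis"
begin

definition avg :: "('a::euclidean_space \<Rightarrow> real) \<Rightarrow> 'a set \<Rightarrow> real" where
  "avg f B = (LINT y:B|lebesgue. \<bar>f y\<bar>) / measure lebesgue B"

definition Mc :: "real \<Rightarrow> ('a::euclidean_space \<Rightarrow> real) \<Rightarrow> 'a \<Rightarrow> ereal" where
  "Mc \<alpha> f x = (SUP r\<in>{0<..}. ereal (r powr \<alpha> * avg f (ball x r)))"

definition Mu :: "real \<Rightarrow> ('a::euclidean_space \<Rightarrow> real) \<Rightarrow> 'a \<Rightarrow> ereal" where
  "Mu \<alpha> f x = (SUP cr\<in>{(c, r). 0 < r \<and> x \<in> ball c r}.
                   ereal (snd cr powr \<alpha> * avg f (ball (fst cr) (snd cr))))"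

definition in_Lp :: "real \<Rightarrow> ('a::euclidean_space \<Rightarrow> real) \<Rightarrow> bool" where
  "in_Lp p f \<longleftrightarrow> f \<in> borel_measurable lebesgue \<and> integrable lebesgue (\<lambda>y. \<bar>f y\<bar> powr p)"

definition lebesgue_point :: "('a::euclidean_space \<Rightarrow> real) \<Rightarrow> 'a \<Rightarrow> bool" where
  "lebesgue_point f x \<longleftrightarrow>
     ((\<lambda>r. (LINT y:ball x r|lebesgue. \<bar>f y - f x\<bar>) / measure lebesgue (ball x r))
        \<longlongrightarrow> 0) (at_right 0)"

end

theory Submission
  imports Defs
begin

text \<open>Write V(c, r) for r^\<alpha> times the mean of |f| over the ball B(c, r). Local integrability
makes V continuous in (c, r) for r > 0 (dominated convergence; spheres are null). Off a compact
range of radii V is small, uniformly over the balls whose closure contains x: for small r because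
the means near a Lebesgue point stay bounded, and for large r because the splitting
|f| \<le> t + t^(1 - p) |f|^p bounds V by a multiple of r^(\<alpha> - d/p), where \<alpha>p < d.
Since f is not a.e. zero, some value of V is positive, so the supremum is a maximum over a compact
set of balls, and among the maximisers one of largest radius exists, again by compactness. A ball
strictly containing it has strictly larger radius and hence a strictly smaller value. Balls with x
on their boundary are limits of slightly larger balls containing x, so they do not raise the
uncentered supremum.\<close>

definition frac_avg :: "real \<Rightarrow> ('a::euclidean_space \<Rightarrow> real) \<Rightarrow> 'a \<Rightarrow> real \<Rightarrow> real" where
  "frac_avg \<alpha> f c r = r powr \<alpha> * avg f (ball c r)"

lemma measure_lebesgue_ball:
  "0 \<le> r \<Longrightarrow>
    measure lebesgue (ball (c::'a::euclidean_space) r) = unit_ball_vol DIM('a) * r ^ DIM('a)"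
  using content_ball by auto

lemma avg_nonneg: "0 \<le> avg f S"
  unfolding avg_def set_lebesgue_integral_def
  by (intro divide_nonneg_nonneg integral_nonneg_AE) (auto simp: indicator_def)

lemma abs_le_add_powr:
  fixes y t p :: real
  assumes "0 < t" "1 \<le> p"
  shows "\<bar>y\<bar> \<le> t + t powr (1 - p) * \<bar>y\<bar> powr p"
proof (cases "\<bar>y\<bar> \<le> t")
  case True
  then show ?thesis by (simp add: add_increasing2)
next
  case False
  then have y: "t < \<bar>y\<bar>" by simp
  have "t powr (1 - p) * \<bar>y\<bar> powr p = \<bar>y\<bar> * (\<bar>y\<bar> / t) powr (p - 1)"
    using y assms by (simp add: powr_divide powr_diff powr_mult_base field_simps)
  moreover have "1 \<le> (\<bar>y\<bar> / t) powr (p - 1)"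
    using y assms by (intro ge_one_powr_ge_zero) auto
  ultimately show ?thesis
    using y assms by (smt (verit) mult_le_cancel_left1 powr_ge_zero)
qed

lemma in_Lp_set_integrable_powr:
  assumes "in_Lp p f" "S \<in> sets lebesgue"
  shows "set_integrable lebesgue S (\<lambda>y. \<bar>f y\<bar> powr p)"
  using assms integrable_real_mult_indicator[of S lebesgue "\<lambda>y. \<bar>f y\<bar> powr p"]
  by (simp add: in_Lp_def set_integrable_def mult.commute)

lemma in_Lp_set_integrable:
  fixes f :: "'a::euclidean_space \<Rightarrow> real"
  assumes Lp: "in_Lp p f" and p: "1 \<le> p" and S: "S \<in> lmeasurable"
  shows "set_integrable lebesgue S f"
proof -
  have meas: "f \<in> borel_measurable lebesgue"
    using Lp by (simp add: in_Lp_def)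
  have "set_integrable lebesgue S (\<lambda>y. 1 + \<bar>f y\<bar> powr p)"
    using S in_Lp_set_integrable_powr[OF Lp]
    by (intro set_integral_add absolutely_integrable_on_const) (auto simp: fmeasurable_def)
  then show ?thesis
  proof (rule set_integrable_bound)
    show "set_borel_measurable lebesgue S f"
      unfolding set_borel_measurable_def using S
      by (intro borel_measurable_scaleR borel_measurable_indicator meas) auto
    show "AE y in lebesgue. y \<in> S \<longrightarrow> norm (f y) \<le> norm (1 + \<bar>f y\<bar> powr p)"
      using abs_le_add_powr[of 1 p] p by (intro AE_I2) simp
  qed
qed

lemma tendsto_indicator_ball:
  assumes "dist c y \<noteq> r" and cn: "cn \<longlonglongrightarrow> c" and rn: "rn \<longlonglongrightarrow> r"
  shows "(\<lambda>n. indicator (ball (cn n) (rn n)) y :: real) \<longlonglongrightarrow> indicator (ball c r) y"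
proof -
  have lim: "(\<lambda>n. dist (cn n) y - rn n) \<longlonglongrightarrow> dist c y - r"
    using cn rn by (intro tendsto_intros)
  show ?thesis
  proof (cases "dist c y < r")
    case True
    then have "\<forall>\<^sub>F n in sequentially. dist (cn n) y - rn n < 0"
      using order_tendstoD(2)[OF lim, of 0] by simp
    then show ?thesis
      by (rule tendsto_eventually[OF eventually_mono]) (use True in \<open>auto simp: indicator_def\<close>)
  next
    case False
    with assms(1) have "\<forall>\<^sub>F n in sequentially. dist (cn n) y - rn n > 0"
      using order_tendstoD(1)[OF lim, of 0] by simp
    then show ?thesis
      by (rule tendsto_eventually[OF eventually_mono]) (use False in \<open>auto simp: indicator_def\<close>)
  qed
qed

lemma tendsto_set_integral_ball:
  fixes g :: "'a::euclidean_space \<Rightarrow> real"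
  assumes int: "\<And>c r. set_integrable lebesgue (ball c r) g"
    and cn: "cn \<longlonglongrightarrow> c" and rn: "rn \<longlonglongrightarrow> r"
  shows "(\<lambda>n. LINT y:ball (cn n) (rn n)|lebesgue. g y) \<longlonglongrightarrow> (LINT y:ball c r|lebesgue. g y)"
proof -
  have "convergent (\<lambda>n. dist (cn n) c + rn n)"
    using convergentI[OF tendsto_add[OF tendsto_dist[OF cn tendsto_const] rn]] .
  then have "Bseq (\<lambda>n. dist (cn n) c + rn n)"
    by (rule convergent_imp_Bseq)
  then obtain R where R: "\<And>n. norm (dist (cn n) c + rn n) \<le> R"
    using BseqE by blast
  have sub: "ball (cn n) (rn n) \<subseteq> ball c R" for n
  proof
    fix y assume "y \<in> ball (cn n) (rn n)"
    then have "dist c (cn n) + dist (cn n) y < R"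
      using R[of n] by (simp add: dist_commute)
    then show "y \<in> ball c R"
      using dist_triangle[of c y "cn n"] by simp
  qed
  have "AE y in lebesgue. y \<notin> sphere c r"
    by (rule AE_not_in) (metis negligible_iff_null_sets negligible_sphere)
  then have lim: "AE y in lebesgue. (\<lambda>n. indicator (ball (cn n) (rn n)) y *\<^sub>R g y)
               \<longlonglongrightarrow> indicator (ball c r) y *\<^sub>R g y"
    by eventually_elim (intro tendsto_scaleR tendsto_indicator_ball cn rn tendsto_const, simp)
  show ?thesis
    unfolding set_lebesgue_integral_def
  proof (rule integral_dominated_convergence[OF _ _ _ lim, where w = "\<lambda>y. indicator (ball c R) y *\<^sub>R \<bar>g y\<bar>"])
    show "integrable lebesgue (\<lambda>y. indicator (ball c R) y *\<^sub>R \<bar>g y\<bar>)"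
      using set_integrable_abs[OF int] by (simp add: set_integrable_def)
    show "AE y in lebesgue. norm (indicator (ball (cn n) (rn n)) y *\<^sub>R g y)
            \<le> indicator (ball c R) y *\<^sub>R \<bar>g y\<bar>" for n
      using sub[of n] by (intro AE_I2) (auto split: split_indicator)
  qed (use int in \<open>auto simp: set_integrable_def\<close>)
qed

lemma continuous_on_frac_avg:
  fixes f :: "'a::euclidean_space \<Rightarrow> real"
  assumes int: "\<And>c r. set_integrable lebesgue (ball c r) f"
  shows "continuous_on (UNIV \<times> {0<..}) (\<lambda>z. frac_avg \<alpha> f (fst z) (snd z))"
proof -
  define \<omega> where "\<omega> = unit_ball_vol DIM('a)"
  have \<omega>: "0 < \<omega>"
    by (simp add: \<omega>_def)
  have frac_avg_eq: "frac_avg \<alpha> f c r =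
      r powr \<alpha> * ((LINT y:ball c r|lebesgue. \<bar>f y\<bar>) / (\<omega> * r ^ DIM('a)))" if "0 < r" for c r
    using that measure_lebesgue_ball[of r c] by (simp add: frac_avg_def avg_def \<omega>_def)
  show ?thesis
  proof (rule continuous_on_sequentiallyI)
    fix u :: "nat \<Rightarrow> 'a \<times> real" and z
    assume u: "\<forall>n. u n \<in> UNIV \<times> {0<..}" and z: "z \<in> UNIV \<times> {0<..}" and lim: "u \<longlonglongrightarrow> z"
    have pos: "0 < snd (u n)" for n
      using u by (auto simp: mem_Times_iff)
    have z_pos: "0 < snd z"
      using z by (auto simp: mem_Times_iff)
    have "(\<lambda>n. snd (u n) powr \<alpha> * ((LINT y:ball (fst (u n)) (snd (u n))|lebesgue. \<bar>f y\<bar>)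
              / (\<omega> * snd (u n) ^ DIM('a))))
          \<longlonglongrightarrow> snd z powr \<alpha> * ((LINT y:ball (fst z) (snd z)|lebesgue. \<bar>f y\<bar>) / (\<omega> * snd z ^ DIM('a)))"
      using z set_integrable_abs[OF int] \<omega>
      by (intro tendsto_intros tendsto_set_integral_ball lim) auto
    then show "(\<lambda>n. frac_avg \<alpha> f (fst (u n)) (snd (u n))) \<longlonglongrightarrow> frac_avg \<alpha> f (fst z) (snd z)"
      using u z by (simp only: frac_avg_eq[OF pos] frac_avg_eq[OF z_pos])
  qed
qed

lemma avg_le_Lp:
  fixes f :: "'a::euclidean_space \<Rightarrow> real"
  assumes Lp: "in_Lp p f" and p: "1 \<le> p" and S: "S \<in> lmeasurable"
    and pos: "0 < measure lebesgue S"
  shows "avg f S \<le> measure lebesgue S powr (- 1 / p) * (1 + (\<integral>y. \<bar>f y\<bar> powr p \<partial>lebesgue))"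
proof -
  define \<mu> where "\<mu> = measure lebesgue S"
  define P where "P = (\<integral>y. \<bar>f y\<bar> powr p \<partial>lebesgue)"
  \<comment> \<open>This choice of t makes both terms of the splitting of |f| equally large.\<close>
  define t where "t = \<mu> powr (- 1 / p)"
  have S': "S \<in> sets lebesgue" "emeasure lebesgue S \<noteq> \<infinity>"
    using S by (auto simp: fmeasurable_def)
  have int: "integrable lebesgue (\<lambda>y. \<bar>f y\<bar> powr p)"
    using Lp by (simp add: in_Lp_def)
  have int_S: "set_integrable lebesgue S (\<lambda>y. \<bar>f y\<bar> powr p)"
    using in_Lp_set_integrable_powr[OF Lp S'(1)] .
  have t: "0 < t"
    using pos by (simp add: t_def \<mu>_def)
  have t_powr: "t powr (1 - p) = \<mu> * t"
  proof -
    have "- 1 / p * (1 - p) = 1 + - 1 / p"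
      using p by (simp add: field_simps)
    then have "t powr (1 - p) = \<mu> powr (1 + - 1 / p)"
      by (simp only: t_def powr_powr)
    then show ?thesis
      using pos by (simp only: powr_add t_def \<mu>_def powr_one_gt_zero_iff powr_one)
  qed
  have "(LINT y:S|lebesgue. \<bar>f y\<bar>) \<le> (LINT y:S|lebesgue. t + t powr (1 - p) * \<bar>f y\<bar> powr p)"
    using int_S set_integrable_abs[OF in_Lp_set_integrable[OF Lp p S]] abs_le_add_powr[OF t p]
      absolutely_integrable_on_const[OF S]
    by (intro set_integral_mono) (auto intro!: set_integral_add)
  also have "\<dots> = (LINT y:S|lebesgue. t) + (LINT y:S|lebesgue. t powr (1 - p) * \<bar>f y\<bar> powr p)"
    using int_S by (intro set_integral_add(2) absolutely_integrable_on_const[OF S]) auto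
  also have "\<dots> = t * \<mu> + t powr (1 - p) * (LINT y:S|lebesgue. \<bar>f y\<bar> powr p)"
    using S' by (simp add: set_integral_const \<mu>_def)
  also have "\<dots> \<le> t * \<mu> + t powr (1 - p) * P"
    using int int_S unfolding P_def set_lebesgue_integral_def set_integrable_def
    by (intro add_left_mono mult_left_mono integral_mono) (auto split: split_indicator)
  also have "\<dots> = \<mu> * (t * (1 + P))"
    by (simp add: t_powr algebra_simps)
  finally show ?thesis
    using pos by (simp add: avg_def pos_divide_le_eq \<mu>_def P_def t_def mult.commute)
qed

lemma frac_avg_le_Lp:
  fixes f :: "'a::euclidean_space \<Rightarrow> real"
  assumes Lp: "in_Lp p f" and p: "1 \<le> p" and "0 < r"
  shows "frac_avg \<alpha> f c r \<le> unit_ball_vol DIM('a) powr (- 1 / p) *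
           (1 + (\<integral>y. \<bar>f y\<bar> powr p \<partial>lebesgue)) * r powr (\<alpha> - DIM('a) / p)"
proof -
  define \<omega> where "\<omega> = unit_ball_vol DIM('a)"
  define P where "P = (\<integral>y. \<bar>f y\<bar> powr p \<partial>lebesgue)"
  have \<omega>: "0 < \<omega>"
    by (simp add: \<omega>_def)
  have m: "measure lebesgue (ball c r) = \<omega> * r ^ DIM('a)"
    using measure_lebesgue_ball[of r c] \<open>0 < r\<close> by (simp add: \<omega>_def)
  have "avg f (ball c r) \<le> measure lebesgue (ball c r) powr (- 1 / p) * (1 + P)"
    unfolding P_def using m \<omega> \<open>0 < r\<close> by (intro avg_le_Lp[OF Lp p lmeasurable_ball]) simp
  also have "measure lebesgue (ball c r) powr (- 1 / p) = \<omega> powr (- 1 / p) * r powr (- DIM('a) / p)"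
    unfolding m using \<open>0 < r\<close> \<omega> by (simp add: powr_mult powr_powr flip: powr_realpow)
  finally have "frac_avg \<alpha> f c r \<le> r powr \<alpha> * (\<omega> powr (- 1 / p) * r powr (- DIM('a) / p) * (1 + P))"
    unfolding frac_avg_def by (simp add: mult_left_mono)
  also have "\<dots> = \<omega> powr (- 1 / p) * (1 + P) * r powr (\<alpha> - DIM('a) / p)"
    by (simp add: powr_diff powr_minus_divide divide_inverse mult_ac)
  finally show ?thesis
    by (simp add: \<omega>_def P_def)
qed

lemma frac_avg_eventually_small_at_top:
  fixes f :: "'a::euclidean_space \<Rightarrow> real"
  assumes Lp: "in_Lp p f" and p: "1 \<le> p" and "0 < \<alpha>" and p_lt: "p < DIM('a) / \<alpha>" and "0 < \<epsilon>"
  shows "\<forall>\<^sub>F r in at_top. \<forall>c. frac_avg \<alpha> f c r < \<epsilon>"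
proof -
  define C where "C = unit_ball_vol DIM('a) powr (- 1 / p) * (1 + (\<integral>y. \<bar>f y\<bar> powr p \<partial>lebesgue))"
  have "\<alpha> - DIM('a) / p < 0"
    using p p_lt \<open>0 < \<alpha>\<close> by (simp add: field_simps)
  then have "((\<lambda>r. C * r powr (\<alpha> - DIM('a) / p)) \<longlongrightarrow> C * 0) at_top"
    by (intro tendsto_mult tendsto_const tendsto_neg_powr filterlim_ident)
  then have "\<forall>\<^sub>F r in at_top. C * r powr (\<alpha> - DIM('a) / p) < \<epsilon>"
    using \<open>0 < \<epsilon>\<close> by (simp add: order_tendstoD(2))
  with eventually_gt_at_top[of 0] show ?thesis
  proof eventually_elim
    case (elim r)
    show ?case
      using frac_avg_le_Lp[OF Lp p elim(1)] elim(2) unfolding C_def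
      by (meson order_le_less_trans)
  qed
qed

lemma lebesgue_point_eventually_avg_less:
  fixes f :: "'a::euclidean_space \<Rightarrow> real"
  assumes lp: "lebesgue_point f x" and int: "\<And>r. set_integrable lebesgue (ball x r) f"
  shows "\<forall>\<^sub>F r in at_right 0. avg f (ball x r) < 1 + \<bar>f x\<bar>"
proof -
  have "\<forall>\<^sub>F r in at_right 0. (LINT y:ball x r|lebesgue. \<bar>f y - f x\<bar>) / measure lebesgue (ball x r) < 1"
    using lp unfolding lebesgue_point_def by (rule order_tendstoD) simp
  with eventually_at_right_less show ?thesis
  proof eventually_elim
    case (elim r)
    have pos: "0 < measure lebesgue (ball x r)"
      using elim(1) measure_lebesgue_ball[of r x] by simp
    have int_diff: "set_integrable lebesgue (ball x r) (\<lambda>y. \<bar>f y - f x\<bar>)"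
      by (intro set_integrable_abs set_integral_diff(1) int absolutely_integrable_on_const) simp
    have "(LINT y:ball x r|lebesgue. \<bar>f y\<bar>) \<le> (LINT y:ball x r|lebesgue. \<bar>f y - f x\<bar> + \<bar>f x\<bar>)"
      using set_integrable_abs[OF int] int_diff
      by (intro set_integral_mono set_integral_add(1) absolutely_integrable_on_const) auto
    also have "\<dots> = (LINT y:ball x r|lebesgue. \<bar>f y - f x\<bar>) + \<bar>f x\<bar> * measure lebesgue (ball x r)"
      using int_diff lmeasurable_ball[of x r]
      by (simp add: set_integral_add(2) set_integral_const fmeasurable_def)
    also have "\<dots> < measure lebesgue (ball x r) * (1 + \<bar>f x\<bar>)"
      using elim(2) pos by (simp add: divide_less_eq algebra_simps)
    finally show ?case
      using pos by (simp add: avg_def divide_less_eq mult.commute)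
  qed
qed

lemma avg_ball_le_avg_double:
  fixes f :: "'a::euclidean_space \<Rightarrow> real"
  assumes "0 < r" "dist c x \<le> r" and int: "set_integrable lebesgue (ball x (2 * r)) f"
  shows "avg f (ball c r) \<le> 2 ^ DIM('a) * avg f (ball x (2 * r))"
proof -
  have sub: "ball c r \<subseteq> ball x (2 * r)"
  proof
    fix y assume "y \<in> ball c r"
    then show "y \<in> ball x (2 * r)"
      using dist_triangle[of x y c] assms(2) by (simp add: dist_commute)
  qed
  have "(LINT y:ball c r|lebesgue. \<bar>f y\<bar>) \<le> (LINT y:ball x (2 * r)|lebesgue. \<bar>f y\<bar>)"
    using set_integrable_abs[OF int] set_integrable_subset[OF set_integrable_abs[OF int] _ sub] sub
    unfolding set_lebesgue_integral_def set_integrable_def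
    by (intro integral_mono) (auto split: split_indicator)
  moreover have "measure lebesgue (ball x (2 * r)) = 2 ^ DIM('a) * measure lebesgue (ball c r)"
    using assms(1) measure_lebesgue_ball[of r c] measure_lebesgue_ball[of "2 * r" x]
    by (simp add: power_mult_distrib)
  moreover have "0 < measure lebesgue (ball c r)"
    using assms(1) measure_lebesgue_ball[of r c] by simp
  ultimately show ?thesis
    by (simp add: avg_def divide_right_mono)
qed

lemma frac_avg_eventually_small_at_0:
  fixes f :: "'a::euclidean_space \<Rightarrow> real"
  assumes lp: "lebesgue_point f x" and int: "\<And>c r. set_integrable lebesgue (ball c r) f"
    and "0 < \<alpha>" "0 < \<epsilon>"
  shows "\<forall>\<^sub>F r in at_right 0. \<forall>c. dist c x \<le> r \<longrightarrow> frac_avg \<alpha> f c r < \<epsilon>"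
proof -
  define K where "K = 2 ^ DIM('a) * (1 + \<bar>f x\<bar>)"
  obtain \<delta> where "0 < \<delta>" and \<delta>: "\<And>r. 0 < r \<Longrightarrow> r < \<delta> \<Longrightarrow> avg f (ball x r) < 1 + \<bar>f x\<bar>"
    using lebesgue_point_eventually_avg_less[OF lp int] unfolding eventually_at_right_field by auto
  have "\<forall>\<^sub>F r in at_right 0. 0 \<le> (r::real)"
    using eventually_at_right_less by (rule eventually_mono) simp
  then have "((\<lambda>r. r powr \<alpha> * K) \<longlongrightarrow> 0 * K) (at_right 0)"
    using \<open>0 < \<alpha>\<close> by (intro tendsto_mult tendsto_zero_powrI tendsto_const) auto
  then have "\<forall>\<^sub>F r in at_right 0. r powr \<alpha> * K < \<epsilon>"
    using \<open>0 < \<epsilon>\<close> by (simp add: order_tendstoD(2))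
  moreover have "\<forall>\<^sub>F r in at_right 0. r < \<delta> / 2"
    using \<open>0 < \<delta>\<close> by (auto simp: eventually_at_right_field intro!: exI[of _ "\<delta> / 2"])
  ultimately show ?thesis
    using eventually_at_right_less
  proof eventually_elim
    case (elim r)
    show ?case
    proof (intro allI impI)
      fix c assume "dist c x \<le> r"
      have "avg f (ball c r) \<le> 2 ^ DIM('a) * avg f (ball x (2 * r))"
        using elim(3) \<open>dist c x \<le> r\<close> int by (rule avg_ball_le_avg_double)
      also have "\<dots> \<le> K"
        using \<delta>[of "2 * r"] elim by (simp add: K_def)
      finally have "frac_avg \<alpha> f c r \<le> r powr \<alpha> * K"
        by (simp add: frac_avg_def mult_left_mono)
      with elim(1) show "frac_avg \<alpha> f c r < \<epsilon>"
        by simp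
    qed
  qed
qed

lemma exists_avg_ball_pos:
  fixes f :: "'a::euclidean_space \<Rightarrow> real"
  assumes int: "\<And>r. set_integrable lebesgue (ball x r) f" and nz: "\<not> (AE y in lebesgue. f y = 0)"
  obtains R where "0 < R" "0 < avg f (ball x R)"
proof -
  have "\<exists>n. 0 < avg f (ball x (Suc n))"
  proof (rule ccontr)
    assume "\<nexists>n. 0 < avg f (ball x (Suc n))"
    then have "avg f (ball x (Suc n)) = 0" for n
      using avg_nonneg[of f "ball x (Suc n)"] by (metis not_less order_antisym)
    moreover have "0 < measure lebesgue (ball x (Suc n))" for n
      using measure_lebesgue_ball[of "Suc n" x] by simp
    ultimately have zero: "integral\<^sup>L lebesgue (\<lambda>y. indicator (ball x (Suc n)) y * \<bar>f y\<bar>) = 0" for n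
      by (simp add: avg_def set_lebesgue_integral_def)
    have "AE y in lebesgue. indicator (ball x (Suc n)) y * \<bar>f y\<bar> = 0" for n
    proof -
      have "integrable lebesgue (\<lambda>y. indicator (ball x (Suc n)) y * \<bar>f y\<bar>)"
        using set_integrable_abs[OF int] by (simp add: set_integrable_def)
      from integral_nonneg_eq_0_iff_AE[OF this] zero[of n] show ?thesis
        by simp
    qed
    then have "AE y in lebesgue. \<forall>n. indicator (ball x (Suc n)) y * \<bar>f y\<bar> = 0"
      by (subst AE_all_countable) blast
    then have "AE y in lebesgue. f y = 0"
    proof eventually_elim
      case (elim y)
      obtain n where "dist x y < real n"
        using reals_Archimedean2 by blast
      then have "y \<in> ball x (Suc n)"
        by simp
      with elim[rule_format, of n] show ?case
        by simp
    qed
    with nz show False ..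
  qed
  then obtain n where "0 < avg f (ball x (Suc n))" ..
  then show ?thesis
    by (intro that[of "Suc n"]) auto
qed

lemma frac_avg_small_off_annulus:
  fixes f :: "'a::euclidean_space \<Rightarrow> real"
  assumes Lp: "in_Lp p f" and p: "1 \<le> p" and "0 < \<alpha>" and p_lt: "p < DIM('a) / \<alpha>"
    and lp: "lebesgue_point f x" and "0 < \<epsilon>"
  shows "\<exists>\<delta>>0. \<exists>R. \<forall>c r. 0 < r \<and> dist c x \<le> r \<and> (r < \<delta> \<or> R \<le> r) \<longrightarrow> frac_avg \<alpha> f c r < \<epsilon>"
proof -
  have int: "set_integrable lebesgue (ball c r) f" for c r
    using in_Lp_set_integrable[OF Lp p lmeasurable_ball] .
  obtain \<delta> where "0 < \<delta>"
    and small: "\<forall>r>0. r < \<delta> \<longrightarrow> (\<forall>c. dist c x \<le> r \<longrightarrow> frac_avg \<alpha> f c r < \<epsilon>)"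
    using frac_avg_eventually_small_at_0[OF lp int \<open>0 < \<alpha>\<close> \<open>0 < \<epsilon>\<close>]
    unfolding eventually_at_right_field by blast
  obtain R where large: "\<forall>r\<ge>R. \<forall>c. frac_avg \<alpha> f c r < \<epsilon>"
    using frac_avg_eventually_small_at_top[OF Lp p \<open>0 < \<alpha>\<close> p_lt \<open>0 < \<epsilon>\<close>]
    unfolding eventually_at_top_linorder by blast
  show ?thesis
    using \<open>0 < \<delta>\<close> small large by (intro exI[of _ \<delta>] conjI exI[of _ R] allI impI) auto
qed

lemma ball_psubset_ballD:
  fixes c :: "'a::euclidean_space"
  assumes "0 < r" "ball c r \<subset> ball c' r'"
  shows "r < r'" "dist c c' + r \<le> r'"
proof -
  show le: "dist c c' + r \<le> r'"
    using assms ball_subset_ball_iff[of c r c' r'] by auto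
  show "r < r'"
  proof (rule ccontr)
    assume "\<not> r < r'"
    with le zero_le_dist[of c c'] have "dist c c' = 0" "r = r'"
      by linarith+
    with assms(2) show False
      by simp
  qed
qed

lemma compact_lex_argmax:
  fixes g h :: "'b::t2_space \<Rightarrow> real"
  assumes "compact K" "K \<noteq> {}" "continuous_on K g" "continuous_on K h"
  obtains z where "z \<in> K" "\<And>w. w \<in> K \<Longrightarrow> g w \<le> g z"
    "\<And>w. w \<in> K \<Longrightarrow> g w = g z \<Longrightarrow> h w \<le> h z"
proof -
  obtain z1 where z1: "z1 \<in> K" "\<forall>w\<in>K. g w \<le> g z1"
    using continuous_attains_sup[OF assms(1-3)] by blast
  define T where "T = {w \<in> K. g w = g z1}"
  have "closed T"
    unfolding T_def using assms(1,3) by (intro continuous_closed_preimage_constant compact_imp_closed)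
  then have "compact T"
    using assms(1) compact_Int_closed[of K T] by (simp add: T_def Int_absorb1)
  moreover have "T \<noteq> {}" "continuous_on T h"
    using z1(1) assms(4) by (auto simp: T_def intro: continuous_on_subset)
  ultimately obtain z where "z \<in> T" "\<forall>w\<in>T. h w \<le> h z"
    using continuous_attains_sup by blast
  with z1 show ?thesis
    by (intro that[of z]) (auto simp: T_def)
qed

lemma lex_argmax_dominated_outside_compact:
  fixes g h :: "'b::t2_space \<Rightarrow> real"
  assumes "compact K" "K \<subseteq> D" "a \<in> K" "continuous_on K g" "continuous_on K h"
    and outside: "\<And>w. w \<in> D - K \<Longrightarrow> g w < g a"
  obtains z where "z \<in> K" "\<And>w. w \<in> D \<Longrightarrow> g w \<le> g z"
    "\<And>w. w \<in> D \<Longrightarrow> g w = g z \<Longrightarrow> h w \<le> h z"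
proof -
  obtain z where z: "z \<in> K" "\<And>w. w \<in> K \<Longrightarrow> g w \<le> g z"
    "\<And>w. w \<in> K \<Longrightarrow> g w = g z \<Longrightarrow> h w \<le> h z"
    using compact_lex_argmax[OF assms(1) _ assms(4,5)] assms(3) by blast
  have "g w < g z" if "w \<in> D - K" for w
    using outside[OF that] z(2)[OF assms(3)] by linarith
  with z show ?thesis
    by (intro that) force+
qed

lemma Mc_attained_at_largest_radius:
  fixes f :: "'a::euclidean_space \<Rightarrow> real"
  assumes cont: "continuous_on (UNIV \<times> {0<..}) (\<lambda>z. frac_avg \<alpha> f (fst z) (snd z))"
    and "0 < \<delta>" "0 < R0"
    and outside: "\<And>r. 0 < r \<Longrightarrow> r < \<delta> \<or> R1 \<le> r \<Longrightarrow> frac_avg \<alpha> f x r < frac_avg \<alpha> f x R0"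
  shows "\<exists>r>0. ereal (frac_avg \<alpha> f x r) = Mc \<alpha> f x \<and>
           (\<forall>s>r. ereal (frac_avg \<alpha> f x s) \<noteq> Mc \<alpha> f x)"
proof -
  have "continuous_on {\<delta>..R1} ((\<lambda>z. frac_avg \<alpha> f (fst z) (snd z)) \<circ> (\<lambda>r. (x, r)))"
    using \<open>0 < \<delta>\<close> by (intro continuous_on_compose continuous_intros continuous_on_subset[OF cont]) auto
  then have "continuous_on {\<delta>..R1} (\<lambda>r. frac_avg \<alpha> f x r)"
    by (simp add: o_def)
  moreover have "frac_avg \<alpha> f x s < frac_avg \<alpha> f x R0" if "s \<in> {0<..} - {\<delta>..R1}" for s
    using that outside by auto
  moreover have "{\<delta>..R1} \<subseteq> {0<..}" "R0 \<in> {\<delta>..R1}"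
    using \<open>0 < \<delta>\<close> \<open>0 < R0\<close> outside[of R0] by force+
  ultimately obtain r where r: "r \<in> {\<delta>..R1}"
    "\<And>s. s \<in> {0<..} \<Longrightarrow> frac_avg \<alpha> f x s \<le> frac_avg \<alpha> f x r"
    "\<And>s. s \<in> {0<..} \<Longrightarrow> frac_avg \<alpha> f x s = frac_avg \<alpha> f x r \<Longrightarrow> s \<le> r"
    using lex_argmax_dominated_outside_compact[OF compact_Icc _ _ _ continuous_on_id] by blast
  have "0 < r"
    using r(1) \<open>0 < \<delta>\<close> by simp
  then have Mc_eq: "Mc \<alpha> f x = ereal (frac_avg \<alpha> f x r)"
    unfolding Mc_def frac_avg_def[symmetric]
    by (intro antisym SUP_least SUP_upper2[of r]) (auto simp: r(2))
  have "frac_avg \<alpha> f x s \<noteq> frac_avg \<alpha> f x r" if "r < s" for s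
    using r(3)[of s] that \<open>0 < r\<close> by fastforce
  with \<open>0 < r\<close> show ?thesis
    by (auto simp: Mc_eq)
qed

lemma frac_avg_le_Mu:
  fixes f :: "'a::euclidean_space \<Rightarrow> real"
  assumes cont: "continuous_on (UNIV \<times> {0<..}) (\<lambda>z. frac_avg \<alpha> f (fst z) (snd z))"
    and "0 < r" "dist c x \<le> r"
  shows "ereal (frac_avg \<alpha> f c r) \<le> Mu \<alpha> f x"
proof -
  have "continuous_on {0<..} ((\<lambda>z. frac_avg \<alpha> f (fst z) (snd z)) \<circ> (\<lambda>s. (c, s)))"
    by (intro continuous_on_compose continuous_intros continuous_on_subset[OF cont]) auto
  then have "isCont (frac_avg \<alpha> f c) r"
    using \<open>0 < r\<close> by (simp add: o_def continuous_on_eq_continuous_at)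
  then have "((\<lambda>s. ereal (frac_avg \<alpha> f c s)) \<longlongrightarrow> ereal (frac_avg \<alpha> f c r)) (at_right r)"
    by (intro tendsto_ereal tendsto_within_subset[OF isContD]) auto
  moreover have "\<forall>\<^sub>F s in at_right r. ereal (frac_avg \<alpha> f c s) \<le> Mu \<alpha> f x"
    using eventually_at_right_less
  proof eventually_elim
    case (elim s)
    then have "(c, s) \<in> {(c, r). 0 < r \<and> x \<in> ball c r}"
      using assms by auto
    then show ?case
      unfolding Mu_def frac_avg_def by (rule SUP_upper2) simp
  qed
  ultimately show ?thesis
    by (intro tendsto_le[OF trivial_limit_at_right_real tendsto_const])
qed

lemma Mu_attained_at_maximal_ball:
  fixes f :: "'a::euclidean_space \<Rightarrow> real"
  assumes cont: "continuous_on (UNIV \<times> {0<..}) (\<lambda>z. frac_avg \<alpha> f (fst z) (snd z))"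
    and "0 < \<delta>" "0 < R0"
    and outside: "\<And>c r. 0 < r \<Longrightarrow> dist c x \<le> r \<Longrightarrow> r < \<delta> \<or> R1 \<le> r \<Longrightarrow>
                    frac_avg \<alpha> f c r < frac_avg \<alpha> f x R0"
  shows "\<exists>c r. 0 < r \<and> x \<in> closure (ball c r) \<and> ereal (frac_avg \<alpha> f c r) = Mu \<alpha> f x \<and>
           (\<forall>c' r'. 0 < r' \<and> ball c r \<subset> ball c' r' \<longrightarrow> ereal (frac_avg \<alpha> f c' r') < Mu \<alpha> f x)"
proof -
  define D where "D = {z. 0 < snd z \<and> dist (fst z) x \<le> snd z}"
  define K where "K = {z. \<delta> \<le> snd z \<and> snd z \<le> R1 \<and> dist (fst z) x \<le> snd z}"
  have K_compact: "compact K"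
  proof -
    have "closed K"
      unfolding K_def by (intro closed_Collect_conj closed_Collect_le continuous_intros)
    moreover have "K \<subseteq> cball x R1 \<times> cball 0 R1"
      using \<open>0 < \<delta>\<close> by (auto simp: K_def dist_commute)
    then have "bounded K"
      by (rule bounded_subset[OF bounded_Times[OF bounded_cball bounded_cball]])
    ultimately show ?thesis
      by (simp add: compact_eq_bounded_closed)
  qed
  have K_sub: "K \<subseteq> D"
    using \<open>0 < \<delta>\<close> by (auto simp: K_def D_def)
  have R0_mem: "(x, R0) \<in> K"
    using \<open>0 < R0\<close> outside[of R0 x] by (force simp: K_def)
  have cont_K: "continuous_on K (\<lambda>z. frac_avg \<alpha> f (fst z) (snd z))"
    using \<open>0 < \<delta>\<close> by (intro continuous_on_subset[OF cont]) (auto simp: K_def)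
  have outside_K: "frac_avg \<alpha> f (fst w) (snd w) < frac_avg \<alpha> f (fst (x, R0)) (snd (x, R0))"
    if "w \<in> D - K" for w
    using that by (simp, intro outside) (auto simp: D_def K_def)
  obtain z where z: "z \<in> K"
    "\<And>w. w \<in> D \<Longrightarrow> frac_avg \<alpha> f (fst w) (snd w) \<le> frac_avg \<alpha> f (fst z) (snd z)"
    "\<And>w. w \<in> D \<Longrightarrow> frac_avg \<alpha> f (fst w) (snd w) = frac_avg \<alpha> f (fst z) (snd z) \<Longrightarrow> snd w \<le> snd z"
    using lex_argmax_dominated_outside_compact[OF K_compact K_sub R0_mem cont_K
          continuous_on_snd[OF continuous_on_id] outside_K] by blast
  obtain c r where [simp]: "z = (c, r)"
    by fastforce
  have "0 < r" "dist c x \<le> r"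
    using z(1) \<open>0 < \<delta>\<close> by (auto simp: K_def)
  have Mu_eq: "Mu \<alpha> f x = ereal (frac_avg \<alpha> f c r)"
  proof (rule antisym)
    show "Mu \<alpha> f x \<le> ereal (frac_avg \<alpha> f c r)"
      unfolding Mu_def frac_avg_def[symmetric]
      using z(2) by (intro SUP_least) (auto simp: D_def dist_commute less_imp_le)
    show "ereal (frac_avg \<alpha> f c r) \<le> Mu \<alpha> f x"
      by (rule frac_avg_le_Mu[OF cont]) fact+
  qed
  have "frac_avg \<alpha> f c' r' < frac_avg \<alpha> f c r" if "0 < r'" "ball c r \<subset> ball c' r'" for c' r'
  proof -
    have "r < r'" "dist c c' + r \<le> r'"
      using ball_psubset_ballD[OF \<open>0 < r\<close> that(2)] by auto
    then have "(c', r') \<in> D"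
      using \<open>0 < r'\<close> \<open>dist c x \<le> r\<close> dist_triangle[of c' x c] by (auto simp: D_def dist_commute)
    with z(2,3)[of "(c', r')"] \<open>r < r'\<close> show ?thesis
      by fastforce
  qed
  with \<open>0 < r\<close> \<open>dist c x \<le> r\<close> show ?thesis
    by (intro exI[of _ c] exI[of _ r]) (auto simp: Mu_eq dist_commute)
qed

theorem lemma2p2:
  fixes f :: "'a::euclidean_space \<Rightarrow> real" and x :: 'a and \<alpha> p :: real
  assumes "0 < \<alpha>" "\<alpha> < real DIM('a)"
    and "1 \<le> p" "p < real DIM('a) / \<alpha>"
    and "in_Lp p f"
    and "\<not> (AE y in lebesgue. f y = 0)"
    and "lebesgue_point f x"
  shows "(\<exists>r>0. ereal (r powr \<alpha> * avg f (ball x r)) = Mc \<alpha> f x \<and>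
            (\<forall>s>r. ereal (s powr \<alpha> * avg f (ball x s)) \<noteq> Mc \<alpha> f x)) \<and>
         (\<exists>c r. 0 < r \<and> x \<in> closure (ball c r) \<and>
            ereal (r powr \<alpha> * avg f (ball c r)) = Mu \<alpha> f x \<and>
            (\<forall>c' r'. 0 < r' \<and> ball c r \<subset> ball c' r' \<longrightarrow>
                ereal (r' powr \<alpha> * avg f (ball c' r')) < Mu \<alpha> f x))"
proof -
  have int: "set_integrable lebesgue (ball c r) f" for c r
    using in_Lp_set_integrable[OF assms(5,3) lmeasurable_ball] .
  note cont = continuous_on_frac_avg[OF int, of \<alpha>]
  obtain R0 where "0 < R0" "0 < avg f (ball x R0)"
    using exists_avg_ball_pos[OF int assms(6)] .
  then have "0 < frac_avg \<alpha> f x R0"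
    by (simp add: frac_avg_def)
  then obtain \<delta> R1 where "0 < \<delta>"
    and annulus: "\<forall>c r. 0 < r \<and> dist c x \<le> r \<and> (r < \<delta> \<or> R1 \<le> r) \<longrightarrow>
      frac_avg \<alpha> f c r < frac_avg \<alpha> f x R0"
    using frac_avg_small_off_annulus[OF assms(5,3,1,4,7)] by blast
  have outside: "\<And>c r. 0 < r \<Longrightarrow> dist c x \<le> r \<Longrightarrow> r < \<delta> \<or> R1 \<le> r \<Longrightarrow>
      frac_avg \<alpha> f c r < frac_avg \<alpha> f x R0"
    using annulus by blast
  have outside_centered: "\<And>r. 0 < r \<Longrightarrow> r < \<delta> \<or> R1 \<le> r \<Longrightarrow>
      frac_avg \<alpha> f x r < frac_avg \<alpha> f x R0"
    using outside[of _ x] by simp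
  show ?thesis
    unfolding frac_avg_def[symmetric]
    using Mc_attained_at_largest_radius[OF cont \<open>0 < \<delta>\<close> \<open>0 < R0\<close> outside_centered]
      Mu_attained_at_maximal_ball[OF cont \<open>0 < \<delta>\<close> \<open>0 < R0\<close> outside]
    by (intro conjI)
qed

end
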